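(* Let $N\ge2$, $\alpha,\beta>0$, $W:\mathbb{R}^2\to\mathbb{R}$, $W(x)=U(|x|)$ twice continuously differentiable, and let $\hat x\in\mathbb{R}^{2N}$ satisfy: (H1) $\sum_{j\ne i}\nabla W(\hat x_i-\hat x_j)=0$ for all $i$; (H2) the kernel of $G=G(\hat x)$ is exactly three-dimensional, spanned by $w_1=1_N\otimes(1,0)^T$, $w_2=1_N\otimes(0,1)^T$, $w_3=\bigl(I_N\otimes\begin{pmatrix}0&-1\\1&0\end{pmatrix}\bigr)\hat x$; (H3) every non-zero eigenvalue of $G$ has negative real part; (H4) $\hat x_1,\dots,\hat x_N$ are not all collinear. Let $m_0\in\mathbb{R}^2$ with $|m_0|^2=\alpha/\beta$ and define the $4N\times4N$ matrix $$F_B^B=\begin{pmatrix}0_{2N\times2N} & \begin{pmatrix}I_{2N-2}\\ -1_{N-1}^T\otimes I_2\end{pmatrix} & 0_{2N\times2}\\ \lceil G\rceil & -I_{N-1}\otimes 2\beta\, m_0m_0^T & 0_{(2N-2)\times2}\\ 0_{2\times2N}&0_{2\times(2N-2)}&-2\beta\, m_0m_0^T\end{pmatrix}.$$ Then $F_B^B$ has no generalized eigenvector for the eigenvalue $0$, i.e. $\ker (F_B^B)^2=\ker F_B^B$.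
   Context: $G(\hat x)\in\mathbb{R}^{2N\times2N}$ is the Jacobian of the system $\dot x_i=-\sum_{j\ne i}\nabla W(x_i-x_j)$ at $\hat x$: it has $2\times2$ blocks $G_{ii}=-\sum_{j\ne i}\operatorname{Hess}W(\hat x_i-\hat x_j)$ and $G_{ij}=\operatorname{Hess}W(\hat x_i-\hat x_j)$ for $i\ne j$. $\lceil G\rceil$ is the $(2N-2)\times2N$ matrix obtained from $G$ by deleting its last two rows. $1_n$ is the all-ones column vector, $0_{n\times p}$ the zero matrix, $\otimes$ the Kronecker product. ($F_B^B$ is the linearization of the second-order swarming model at a flock, written in mean-velocity coordinates and restricted to mean-velocity-consistent perturbations.) *)

theory Defs
  imports "HOL-Analysis.Analysis" "Jordan_Normal_Form.Matrix_Kernel" "Jordan_Normal_Form.Char_Poly"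
begin

definition comp2 :: "real \<times> real \<Rightarrow> nat \<Rightarrow> real" where
  "comp2 p a = (if a = 0 then fst p else snd p)"

definition e2 :: "nat \<Rightarrow> real \<times> real" where
  "e2 b = (if b = 0 then (1, 0) else (0, 1))"

definition hess_entry :: "(real \<times> real \<Rightarrow> real \<times> real \<Rightarrow> real \<times> real) \<Rightarrow> real \<times> real \<Rightarrow> nat \<Rightarrow> nat \<Rightarrow> real" where
  "hess_entry D2W x a b = comp2 (D2W x (e2 b)) a"

definition C2_grad_hess :: "(real \<times> real \<Rightarrow> real) \<Rightarrow> (real \<times> real \<Rightarrow> real \<times> real)
     \<Rightarrow> (real \<times> real \<Rightarrow> real \<times> real \<Rightarrow> real \<times> real) \<Rightarrow> bool" where
  "C2_grad_hess W gradW D2W \<longleftrightarrow>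
     (\<forall>x. (W has_derivative (\<lambda>h. fst (gradW x) * fst h + snd (gradW x) * snd h)) (at x)) \<and>
     (\<forall>x. (gradW has_derivative D2W x) (at x)) \<and>
     (\<forall>h. continuous_on UNIV (\<lambda>x. D2W x h))"

(* Jacobian G(xh) in R^{2N x 2N}; index 2*i+a corresponds to component a of particle i (i < N). *)
definition Gmat :: "nat \<Rightarrow> (real \<times> real \<Rightarrow> real \<times> real \<Rightarrow> real \<times> real) \<Rightarrow> (nat \<Rightarrow> real \<times> real) \<Rightarrow> real mat" where
  "Gmat N D2W xh = mat (2*N) (2*N) (\<lambda>(r, c).
      let i = r div 2; a = r mod 2; j = c div 2; b = c mod 2 in
      if i = j then - (\<Sum>k\<in>{0..<N} - {i}. hess_entry D2W (xh i - xh k) a b)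
      else hess_entry D2W (xh i - xh j) a b)"

definition w1 :: "nat \<Rightarrow> real vec" where
  "w1 N = vec (2*N) (\<lambda>r. if r mod 2 = 0 then 1 else 0)"
definition w2 :: "nat \<Rightarrow> real vec" where
  "w2 N = vec (2*N) (\<lambda>r. if r mod 2 = 0 then 0 else 1)"
definition w3 :: "nat \<Rightarrow> (nat \<Rightarrow> real \<times> real) \<Rightarrow> real vec" where
  "w3 N xh = vec (2*N) (\<lambda>r. if r mod 2 = 0 then - snd (xh (r div 2)) else fst (xh (r div 2)))"

(* The 4N x 4N matrix F_B^B.  Column/row blocks: [0,2N), [2N,4N-2), [4N-2,4N). *)
definition FBB :: "nat \<Rightarrow> real mat \<Rightarrow> real \<Rightarrow> real \<times> real \<Rightarrow> real mat" where
  "FBB N G \<beta> m0 = mat (4*N) (4*N) (\<lambda>(r, c).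
     let mm = (\<lambda>a b. 2 * \<beta> * comp2 m0 a * comp2 m0 b) in
     if r < 2*N then
       (if 2*N \<le> c \<and> c < 4*N - 2 then
          (let c' = c - 2*N in
            if r < 2*N - 2 then (if r = c' then 1 else 0)
            else (if r mod 2 = c' mod 2 then -1 else 0))
        else 0)
     else if r < 4*N - 2 then
       (let r' = r - 2*N in
         if c < 2*N then G $$ (r', c)
         else if c < 4*N - 2 then
           (let c' = c - 2*N in
             if r' div 2 = c' div 2 then - mm (r' mod 2) (c' mod 2) else 0)
         else 0)
     else
       (if 4*N - 2 \<le> c then - mm (r - (4*N - 2)) (c - (4*N - 2)) else 0))"

end

theory Submission
  imports Defs
begin

text \<open>
  Write \<open>u = F v\<close> and suppose \<open>F u = 0\<close>.  Reading \<open>F u = 0\<close> block by block, the relative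
  velocities of \<open>u\<close> vanish, its mean velocity vanishes because \<open>m m\<^sup>T\<close> has no nilpotent part,
  and its positions \<open>u\<^sub>x\<close> satisfy \<open>G u\<^sub>x = 0\<close>: the missing last block row of \<open>G\<close> is minus the
  sum of the others, since \<open>G\<close> is symmetric (Schwarz, and \<open>W\<close> is even) and kills translations.
  Reading \<open>u = F v\<close> the same way gives \<open>G v\<^sub>x = 2\<beta> (I \<otimes> m m\<^sup>T) u\<^sub>x\<close>, so
  \<open>0 = (G u\<^sub>x)\<^sup>T v\<^sub>x = u\<^sub>x\<^sup>T G v\<^sub>x = 2\<beta> \<Sum>\<^sub>i (m \<bullet> u\<^sub>x\<^sub>i)\<^sup>2\<close>.  Now \<open>u\<^sub>x = a w\<^sub>1 + b w\<^sub>2 + c w\<^sub>3\<close>; if \<open>c \<noteq> 0\<close>,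
  \<open>m \<bullet> u\<^sub>x\<^sub>i = 0\<close> for all \<open>i\<close> puts every \<open>x\<^sub>i - x\<^sub>j\<close> on the line through \<open>m\<close>, contradicting (H4);
  and \<open>\<Sum>\<^sub>i u\<^sub>x\<^sub>i = 0\<close> forces \<open>a = b = 0\<close>.
\<close>

no_notation vec_nth (infixl \<open>$\<close> 90)

lemma has_vector_derivative_along_line:
  assumes "\<And>y. (f has_derivative f' y) (at y)"
  shows "((\<lambda>s. f (a + s *\<^sub>R d)) has_vector_derivative f' (a + s *\<^sub>R d) d) (at s)"
proof -
  have "((\<lambda>s. a + s *\<^sub>R d) has_derivative (\<lambda>h. h *\<^sub>R d)) (at s)"
    by (auto intro!: derivative_eq_intros)
  from has_derivative_compose[OF this assms]
  show ?thesis
    unfolding has_vector_derivative_def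
    using linear_scale[OF has_derivative_linear[OF assms]] by simp
qed

lemma second_difference_mean_value:
  fixes W :: "'a::real_inner \<Rightarrow> real"
  assumes dW: "\<And>y. (W has_derivative inner (g y)) (at y)"
    and dg: "\<And>y. (g has_derivative D y) (at y)"
    and t: "t > 0"
  shows "\<exists>\<xi> \<eta>. 0 < \<xi> \<and> \<xi> < t \<and> 0 < \<eta> \<and> \<eta> < t \<and>
    W (x + t *\<^sub>R d + t *\<^sub>R e) - W (x + t *\<^sub>R d) - W (x + t *\<^sub>R e) + W x
      = t * t * inner (D (x + \<xi> *\<^sub>R d + \<eta> *\<^sub>R e) e) d"
proof -
  have W': "((\<lambda>s. W (a + s *\<^sub>R d)) has_real_derivative inner (g (a + s *\<^sub>R d)) d) (at s)" for a s
    using has_vector_derivative_along_line[OF dW]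
    by (simp add: has_real_derivative_iff_has_vector_derivative)
  have g': "((\<lambda>r. inner (g (a + r *\<^sub>R e)) d) has_real_derivative inner (D (a + r *\<^sub>R e) e) d) (at r)" for a r
    using has_vector_derivative_along_line[OF has_derivative_inner_left[OF dg]]
    by (simp add: has_real_derivative_iff_has_vector_derivative)
  have "\<exists>\<xi>>0. \<xi> < t \<and> W (x + t *\<^sub>R e + t *\<^sub>R d) - W (x + t *\<^sub>R d) - (W (x + t *\<^sub>R e + 0 *\<^sub>R d) - W (x + 0 *\<^sub>R d))
      = (t - 0) * (inner (g (x + t *\<^sub>R e + \<xi> *\<^sub>R d)) d - inner (g (x + \<xi> *\<^sub>R d)) d)"
    by (rule MVT2[OF t]) (intro DERIV_diff W')
  then obtain \<xi> where \<xi>: "0 < \<xi>" "\<xi> < t"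
    and "W (x + t *\<^sub>R e + t *\<^sub>R d) - W (x + t *\<^sub>R d) - (W (x + t *\<^sub>R e) - W x)
      = t * (inner (g (x + t *\<^sub>R e + \<xi> *\<^sub>R d)) d - inner (g (x + \<xi> *\<^sub>R d)) d)"
    by auto
  moreover have "\<exists>\<eta>>0. \<eta> < t \<and> inner (g (x + \<xi> *\<^sub>R d + t *\<^sub>R e)) d - inner (g (x + \<xi> *\<^sub>R d + 0 *\<^sub>R e)) d
      = (t - 0) * inner (D (x + \<xi> *\<^sub>R d + \<eta> *\<^sub>R e) e) d"
    by (rule MVT2[OF t]) (rule g')
  then obtain \<eta> where "0 < \<eta>" "\<eta> < t"
    and "inner (g (x + \<xi> *\<^sub>R d + t *\<^sub>R e)) d - inner (g (x + \<xi> *\<^sub>R d)) d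
      = t * inner (D (x + \<xi> *\<^sub>R d + \<eta> *\<^sub>R e) e) d"
    by auto
  ultimately show ?thesis
    by (intro exI[of _ \<xi>] exI[of _ \<eta>]) (simp add: add_ac)
qed

lemma mixed_second_derivatives_nearby:
  fixes W :: "'a::real_inner \<Rightarrow> real"
  assumes dW: "\<And>y. (W has_derivative inner (g y)) (at y)"
    and dg: "\<And>y. (g has_derivative D y) (at y)"
    and t: "t > 0"
  shows "\<exists>\<xi> \<eta> \<xi>' \<eta>'. 0 < \<xi> \<and> \<xi> < t \<and> 0 < \<eta> \<and> \<eta> < t \<and> 0 < \<xi>' \<and> \<xi>' < t \<and> 0 < \<eta>' \<and> \<eta>' < t \<and>
      inner (D (x + \<xi> *\<^sub>R d + \<eta> *\<^sub>R e) e) d = inner (D (x + \<xi>' *\<^sub>R e + \<eta>' *\<^sub>R d) d) e"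
proof -
  obtain \<xi> \<eta> where "0 < \<xi>" "\<xi> < t" "0 < \<eta>" "\<eta> < t"
    and de: "W (x + t *\<^sub>R d + t *\<^sub>R e) - W (x + t *\<^sub>R d) - W (x + t *\<^sub>R e) + W x
      = t * t * inner (D (x + \<xi> *\<^sub>R d + \<eta> *\<^sub>R e) e) d"
    using second_difference_mean_value[OF dW dg t, of x d e] by blast
  moreover obtain \<xi>' \<eta>' where "0 < \<xi>'" "\<xi>' < t" "0 < \<eta>'" "\<eta>' < t"
    and ed: "W (x + t *\<^sub>R e + t *\<^sub>R d) - W (x + t *\<^sub>R e) - W (x + t *\<^sub>R d) + W x
      = t * t * inner (D (x + \<xi>' *\<^sub>R e + \<eta>' *\<^sub>R d) d) e"
    using second_difference_mean_value[OF dW dg t, of x e d] by blast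
  moreover have "t * t * inner (D (x + \<xi> *\<^sub>R d + \<eta> *\<^sub>R e) e) d
      = t * t * inner (D (x + \<xi>' *\<^sub>R e + \<eta>' *\<^sub>R d) d) e"
    using de ed by (simp add: algebra_simps)
  ultimately show ?thesis
    using t by auto
qed

theorem mixed_second_derivatives_eq:
  fixes W :: "'a::real_inner \<Rightarrow> real"
  assumes dW: "\<And>y. (W has_derivative inner (g y)) (at y)"
    and dg: "\<And>y. (g has_derivative D y) (at y)"
    and cont: "\<And>h. continuous_on UNIV (\<lambda>y. D y h)"
  shows "inner (D x e) d = inner (D x d) e"
proof -
  define t :: "nat \<Rightarrow> real" where "t n = inverse (real (Suc n))" for n
  have "t n > 0" for n
    by (simp add: t_def)
  then have "\<exists>\<xi> \<eta> \<xi>' \<eta>'. 0 < \<xi> \<and> \<xi> < t n \<and> 0 < \<eta> \<and> \<eta> < t n \<and> 0 < \<xi>' \<and> \<xi>' < t n \<and> 0 < \<eta>' \<and> \<eta>' < t n \<and>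
      inner (D (x + \<xi> *\<^sub>R d + \<eta> *\<^sub>R e) e) d = inner (D (x + \<xi>' *\<^sub>R e + \<eta>' *\<^sub>R d) d) e" for n
    by (rule mixed_second_derivatives_nearby[OF dW dg])
  then obtain \<xi> \<eta> \<xi>' \<eta>' where bounds: "\<And>n. 0 < \<xi> n \<and> \<xi> n < t n \<and> 0 < \<eta> n \<and> \<eta> n < t n
      \<and> 0 < \<xi>' n \<and> \<xi>' n < t n \<and> 0 < \<eta>' n \<and> \<eta>' n < t n"
    and eq: "\<And>n. inner (D (x + \<xi> n *\<^sub>R d + \<eta> n *\<^sub>R e) e) d = inner (D (x + \<xi>' n *\<^sub>R e + \<eta>' n *\<^sub>R d) d) e"
    by metis
  have t_0: "t \<longlonglongrightarrow> 0"
    unfolding t_def using LIMSEQ_inverse_real_of_nat .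
  have to_0: "s \<longlonglongrightarrow> 0" if "\<And>n. 0 < s n \<and> s n < t n" for s
    by (rule tendsto_sandwich[OF _ _ tendsto_const t_0]) (use that in \<open>auto intro!: always_eventually less_imp_le\<close>)
  have D_cont: "(\<lambda>n. D (p n) h) \<longlonglongrightarrow> D x h" if "p \<longlonglongrightarrow> x" for p h
    by (rule isCont_tendsto_compose[OF _ that]) (use cont[of h] in \<open>simp add: continuous_on_eq_continuous_at\<close>)
  have "(\<lambda>n. x + \<xi> n *\<^sub>R d + \<eta> n *\<^sub>R e) \<longlonglongrightarrow> x + 0 *\<^sub>R d + 0 *\<^sub>R e"
    using bounds by (intro tendsto_intros to_0) auto
  then have lim1: "(\<lambda>n. inner (D (x + \<xi> n *\<^sub>R d + \<eta> n *\<^sub>R e) e) d) \<longlonglongrightarrow> inner (D x e) d"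
    by (intro tendsto_inner D_cont tendsto_const) simp
  have "(\<lambda>n. x + \<xi>' n *\<^sub>R e + \<eta>' n *\<^sub>R d) \<longlonglongrightarrow> x + 0 *\<^sub>R e + 0 *\<^sub>R d"
    using bounds by (intro tendsto_intros to_0) auto
  then have lim2: "(\<lambda>n. inner (D (x + \<xi>' n *\<^sub>R e + \<eta>' n *\<^sub>R d) d) e) \<longlonglongrightarrow> inner (D x d) e"
    by (intro tendsto_inner D_cont tendsto_const) simp
  show ?thesis
    using LIMSEQ_unique[OF lim1[unfolded eq] lim2] .
qed

lemma gradient_odd_if_even:
  fixes W :: "'a::real_inner \<Rightarrow> real"
  assumes dW: "\<And>y. (W has_derivative inner (g y)) (at y)"
    and even: "\<And>y. W (- y) = W y"
  shows "g (- x) = - g x"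
proof -
  have "((\<lambda>y. W (- y)) has_derivative (\<lambda>h. inner (g (- x)) (- h))) (at x)"
    using has_derivative_compose[OF has_derivative_minus[OF has_derivative_ident] dW] by simp
  then have "(W has_derivative (\<lambda>h. inner (g (- x)) (- h))) (at x)"
    using even by simp
  from has_derivative_unique[OF dW this]
  have "inner (g x + g (- x)) h = 0" for h
    by (simp add: inner_add_left fun_eq_iff)
  from this[of "g x + g (- x)"] show ?thesis
    by (simp add: eq_neg_iff_add_eq_0 add.commute)
qed

lemma derivative_even_if_odd:
  assumes dg: "\<And>y. (g has_derivative D y) (at y)"
    and odd: "\<And>y. g (- y) = - g y"
  shows "D (- x) = D x"
proof -
  have "((\<lambda>y. - g (- y)) has_derivative (\<lambda>h. - D (- x) (- h))) (at x)"
    using has_derivative_minus[OF has_derivative_compose[OF has_derivative_minus[OF has_derivative_ident] dg]]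
    by simp
  then have "(g has_derivative (\<lambda>h. - D (- x) (- h))) (at x)"
    using odd by simp
  from has_derivative_unique[OF dg this]
  show ?thesis
    using linear_neg[OF has_derivative_linear[OF dg[of "- x"]]] by (simp add: fun_eq_iff)
qed

lemma comp2_eq_inner_e2: "comp2 p a = inner p (e2 a)"
  by (simp add: comp2_def e2_def inner_prod_def)

lemma C2_grad_hessD:
  assumes "C2_grad_hess W gradW D2W"
  shows "(W has_derivative inner (gradW x)) (at x)"
    and "(gradW has_derivative D2W x) (at x)"
    and "continuous_on UNIV (\<lambda>x. D2W x h)"
proof -
  have inner: "inner p = (\<lambda>h. fst p * fst h + snd p * snd h)" for p :: "real \<times> real"
    by (simp add: fun_eq_iff inner_prod_def)
  show "(W has_derivative inner (gradW x)) (at x)"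
    "(gradW has_derivative D2W x) (at x)" "continuous_on UNIV (\<lambda>x. D2W x h)"
    using assms unfolding C2_grad_hess_def inner by blast+
qed

lemma hess_entry_commute:
  assumes "C2_grad_hess W gradW D2W"
  shows "hess_entry D2W x a b = hess_entry D2W x b a"
  using mixed_second_derivatives_eq[OF C2_grad_hessD[OF assms]]
  by (simp add: hess_entry_def comp2_eq_inner_e2)

lemma hess_entry_uminus:
  assumes C2: "C2_grad_hess W gradW D2W" and radial: "\<forall>x. W x = U (norm x)"
  shows "hess_entry D2W (- x) a b = hess_entry D2W x a b"
proof -
  have "W (- y) = W y" for y
    by (simp add: radial)
  then have "gradW (- y) = - gradW y" for y
    by (rule gradient_odd_if_even[OF C2_grad_hessD(1)[OF C2]])
  then have "D2W (- x) = D2W x"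
    by (rule derivative_even_if_odd[OF C2_grad_hessD(2)[OF C2]])
  then show ?thesis
    by (simp add: hess_entry_def)
qed

lemma Gmat_carrier: "Gmat N D2W xh \<in> carrier_mat (2*N) (2*N)"
  by (simp add: Gmat_def)

lemma transpose_Gmat:
  assumes commute: "\<And>x a b. hess_entry D2W x a b = hess_entry D2W x b a"
    and uminus: "\<And>x a b. hess_entry D2W (- x) a b = hess_entry D2W x a b"
  shows "transpose_mat (Gmat N D2W xh) = Gmat N D2W xh"
proof (rule eq_matI)
  fix r c assume "r < dim_row (Gmat N D2W xh)" "c < dim_col (Gmat N D2W xh)"
  moreover have "hess_entry D2W (xh j - xh i) b a = hess_entry D2W (xh i - xh j) a b" for i j a b
    using uminus[of "xh i - xh j" b a] commute by simp
  ultimately show "transpose_mat (Gmat N D2W xh) $$ (r, c) = Gmat N D2W xh $$ (r, c)"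
    by (cases "r div 2 = c div 2") (simp_all add: Gmat_def Let_def commute[of _ "c mod 2"])
qed (simp_all add: Gmat_def)

definition pair_at :: "'a vec \<Rightarrow> nat \<Rightarrow> 'a \<times> 'a" where
  "pair_at v k = (v $ k, v $ Suc k)"

lemma sum_lessThan_double: "(\<Sum>r<2*n. f r) = (\<Sum>i<n. f (2*i) + f (2*i+1))" for n :: nat
  by (induction n) (auto simp: add.assoc)

lemma sum_lessThan_add: "(\<Sum>c<p+q. f c) = (\<Sum>c<p. f c) + (\<Sum>k<q. f (p+k))" for p q :: nat
  by (induction q) (auto simp: add.assoc)

lemma index_mult_mat_vec_sum:
  "A \<in> carrier_mat n m \<Longrightarrow> v \<in> carrier_vec m \<Longrightarrow> i < n \<Longrightarrow> (A *\<^sub>v v) $ i = (\<Sum>c<m. A $$ (i,c) * v $ c)"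
  by (auto simp: scalar_prod_def atLeast0LessThan intro!: sum.cong)

lemma scalar_prod_eq_sum_inner_pair_at:
  assumes "v \<in> carrier_vec (2*n)" "w \<in> carrier_vec (2*n)"
  shows "v \<bullet> w = (\<Sum>i<n. inner (pair_at v (2*i)) (pair_at w (2*i)))"
  using assms by (simp add: scalar_prod_def atLeast0LessThan sum_lessThan_double pair_at_def inner_prod_def)

lemma eq_zero_vec_if_pair_at:
  assumes "v \<in> carrier_vec (2*n)" and "\<And>i. i < n \<Longrightarrow> pair_at v (2*i) = 0"
  shows "v = 0\<^sub>v (2*n)"
proof (rule eq_vecI)
  fix r assume "r < dim_vec (0\<^sub>v (2*n) :: 'a vec)"
  then have "r div 2 < n" and "r = 2 * (r div 2) \<or> r = Suc (2 * (r div 2))"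
    by auto
  then show "v $ r = 0\<^sub>v (2*n) $ r"
    using assms(2)[of "r div 2"] \<open>r < _\<close> by (auto simp: pair_at_def zero_prod_def)
qed (use assms in simp)

lemma sum_pair_at_mult_vec_eq_0:
  fixes G :: "real mat"
  assumes G: "G \<in> carrier_mat (2*n) (2*n)" and sym: "transpose_mat G = G"
    and kernel: "w1 n \<in> mat_kernel G" "w2 n \<in> mat_kernel G"
    and v: "v \<in> carrier_vec (2*n)"
  shows "(\<Sum>i<n. pair_at (G *\<^sub>v v) (2*i)) = 0"
proof -
  have "(G *\<^sub>v v) \<bullet> w = 0" if "w \<in> mat_kernel G" for w
  proof -
    have w: "w \<in> carrier_vec (2*n)" and "G *\<^sub>v w = 0\<^sub>v (2*n)"
      using mat_kernelD[OF G that] by auto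
    then show ?thesis
      using transpose_vec_mult_scalar[OF G w v] sym v by (simp add: comm_scalar_prod[of _ "2*n"])
  qed
  moreover have "(\<Sum>i<n. pair_at u (2*i)) = (u \<bullet> w1 n, u \<bullet> w2 n)" if "u \<in> carrier_vec (2*n)" for u
    using that by (simp add: scalar_prod_eq_sum_inner_pair_at w1_def w2_def pair_at_def fst_sum snd_sum prod_eq_iff)
  ultimately show ?thesis
    using kernel G v by (simp add: zero_prod_def)
qed

lemma pair_at_eqI:
  assumes "\<And>a. a < 2 \<Longrightarrow> v $ (k + a) = comp2 p a"
  shows "pair_at v k = p"
  using assms[of 0] assms[of 1] by (simp add: pair_at_def comp2_def prod_eq_iff)

lemma comp2_pair_at: "a < 2 \<Longrightarrow> comp2 (pair_at v k) a = v $ (k + a)"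
  by (auto simp: comp2_def pair_at_def less_2_cases_iff)

lemma FBB_carrier: "FBB N G \<beta> m \<in> carrier_mat (4*N) (4*N)"
  by (simp add: FBB_def)

lemma FBB_mult_vec_split:
  assumes v: "v \<in> carrier_vec (4*Suc M)" and r: "r < 4*Suc M"
  shows "(FBB (Suc M) G \<beta> m *\<^sub>v v) $ r =
     (\<Sum>c<2*M+2. FBB (Suc M) G \<beta> m $$ (r,c) * v $ c)
   + (\<Sum>i<M. FBB (Suc M) G \<beta> m $$ (r,2*M+2+2*i) * v $ (2*M+2+2*i)
          + FBB (Suc M) G \<beta> m $$ (r,2*M+2+2*i+1) * v $ (2*M+2+2*i+1))
   + FBB (Suc M) G \<beta> m $$ (r,4*M+2) * v $ (4*M+2)
   + FBB (Suc M) G \<beta> m $$ (r,Suc (4*M+2)) * v $ Suc (4*M+2)"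
proof -
  have "4*Suc M = (2*M+2) + 2*M + 2" by simp
  then show ?thesis
    unfolding index_mult_mat_vec_sum[OF FBB_carrier v r]
    by (simp only: sum_lessThan_add sum_lessThan_double) (simp add: sum.lessThan_Suc algebra_simps numeral_eq_Suc)
qed

text \<open>
  With \<open>N = Suc M\<close>, particle \<open>i\<close> of a vector of length \<open>4 N\<close> has its position at
  \<open>pair_at v (2*i)\<close> (\<open>i \<le> M\<close>) and its relative velocity at \<open>pair_at v (2*M+2+2*i)\<close> (\<open>i < M\<close>);
  the mean velocity is \<open>pair_at v (4*M+2)\<close>.
\<close>

lemma FBB_mult_vec_position:
  assumes v: "v \<in> carrier_vec (4*Suc M)" and i: "i < M"
  shows "pair_at (FBB (Suc M) G \<beta> m *\<^sub>v v) (2*i) = pair_at v (2*M+2+2*i)"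
proof (rule pair_at_eqI)
  fix a :: nat assume a: "a < 2"
  then have r: "2*i+a < 4*Suc M" using i by simp
  have "(FBB (Suc M) G \<beta> m *\<^sub>v v) $ (2*i+a) = (\<Sum>c<4*Suc M. if c = 2*M+2+2*i+a then v $ c else 0)"
    unfolding index_mult_mat_vec_sum[OF FBB_carrier v r] using a i
    by (intro sum.cong) (auto simp: FBB_def Let_def)
  then show "(FBB (Suc M) G \<beta> m *\<^sub>v v) $ (2*i+a) = comp2 (pair_at v (2*M+2+2*i)) a"
    using a i by (simp add: comp2_pair_at add.assoc)
qed

lemma FBB_mult_vec_last_position:
  assumes v: "v \<in> carrier_vec (4*Suc M)"
  shows "pair_at (FBB (Suc M) G \<beta> m *\<^sub>v v) (2*M) = - (\<Sum>i<M. pair_at v (2*M+2+2*i))"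
proof (rule pair_at_eqI)
  fix a :: nat assume a: "a < 2"
  then have r: "2*M+a < 4*Suc M" by simp
  have "(FBB (Suc M) G \<beta> m *\<^sub>v v) $ (2*M+a) = - (\<Sum>i<M. v $ (2*M+2+2*i+a))"
    unfolding FBB_mult_vec_split[OF v r] using a
    by (auto simp: FBB_def Let_def less_2_cases_iff sum_negf)
  then show "(FBB (Suc M) G \<beta> m *\<^sub>v v) $ (2*M+a) = comp2 (- (\<Sum>i<M. pair_at v (2*M+2+2*i))) a"
    using a by (auto simp: less_2_cases_iff comp2_def pair_at_def fst_sum snd_sum sum_negf)
qed

lemma FBB_mult_vec_velocity:
  assumes G: "G \<in> carrier_mat (2*Suc M) (2*Suc M)"
    and v: "v \<in> carrier_vec (4*Suc M)" and i: "i < M"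
  shows "pair_at (FBB (Suc M) G \<beta> m *\<^sub>v v) (2*M+2+2*i)
    = pair_at (G *\<^sub>v vec_first v (2*Suc M)) (2*i) - (2*\<beta>*inner m (pair_at v (2*M+2+2*i))) *\<^sub>R m"
proof (rule pair_at_eqI)
  fix a :: nat assume a: "a < 2"
  then have r: "2*M+2+2*i+a < 4*Suc M" using i by simp
  let ?k = "2*M+2+2*i"
  have "(\<Sum>j<M. FBB (Suc M) G \<beta> m $$ (?k+a,2*M+2+2*j) * v $ (2*M+2+2*j)
          + FBB (Suc M) G \<beta> m $$ (?k+a,2*M+2+2*j+1) * v $ (2*M+2+2*j+1))
      = (\<Sum>j<M. if j = i then - 2 * \<beta> * comp2 m a * (fst m * v $ ?k + snd m * v $ Suc ?k) else 0)"
    using a i by (intro sum.cong refl) (auto simp: FBB_def Let_def less_2_cases_iff comp2_def distrib_left)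
  moreover have "(\<Sum>c<2*M+2. FBB (Suc M) G \<beta> m $$ (?k+a,c) * v $ c) = (\<Sum>c<2*M+2. G $$ (2*i+a,c) * v $ c)"
    using a i by (intro sum.cong) (auto simp: FBB_def Let_def)
  moreover have "FBB (Suc M) G \<beta> m $$ (?k+a,4*M+2) = 0" "FBB (Suc M) G \<beta> m $$ (?k+a,Suc (4*M+2)) = 0"
    using a i by (simp_all add: FBB_def Let_def)
  ultimately have "(FBB (Suc M) G \<beta> m *\<^sub>v v) $ (?k+a) = (\<Sum>c<2*M+2. G $$ (2*i+a,c) * v $ c)
     - 2 * \<beta> * comp2 m a * (fst m * v $ ?k + snd m * v $ Suc ?k)"
    unfolding FBB_mult_vec_split[OF v r] using i by simp
  moreover have "(G *\<^sub>v vec_first v (2*Suc M)) $ (2*i+a) = (\<Sum>c<2*M+2. G $$ (2*i+a,c) * v $ c)"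
    using a i by (simp add: index_mult_mat_vec_sum[OF G] vec_first_def)
  ultimately show "(FBB (Suc M) G \<beta> m *\<^sub>v v) $ (2*M+2+2*i+a) =
    comp2 (pair_at (G *\<^sub>v vec_first v (2*Suc M)) (2*i) - (2*\<beta>*inner m (pair_at v (2*M+2+2*i))) *\<^sub>R m) a"
    using a by (auto simp: less_2_cases_iff comp2_def pair_at_def inner_prod_def)
qed

lemma FBB_mult_vec_mean_velocity:
  assumes v: "v \<in> carrier_vec (4*Suc M)"
  shows "pair_at (FBB (Suc M) G \<beta> m *\<^sub>v v) (4*M+2) = - (2*\<beta>*inner m (pair_at v (4*M+2))) *\<^sub>R m"
proof (rule pair_at_eqI)
  fix a :: nat assume a: "a < 2"
  then have r: "4*M+2+a < 4*Suc M" by simp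
  have "(FBB (Suc M) G \<beta> m *\<^sub>v v) $ (4*M+2+a) = - 2 * \<beta> * comp2 m a * (fst m * v $ (4*M+2) + snd m * v $ Suc (4*M+2))"
    unfolding FBB_mult_vec_split[OF v r] using a
    by (auto simp: FBB_def Let_def less_2_cases_iff comp2_def algebra_simps)
  then show "(FBB (Suc M) G \<beta> m *\<^sub>v v) $ (4*M+2+a) = comp2 (- (2*\<beta>*inner m (pair_at v (4*M+2))) *\<^sub>R m) a"
    using a by (auto simp: less_2_cases_iff comp2_def pair_at_def inner_prod_def)
qed

lemma parallel_if_cross_eq_0:
  fixes m d :: "real \<times> real"
  assumes "m \<noteq> 0" and "snd m * fst d = fst m * snd d"
  shows "d = (inner m d / inner m m) *\<^sub>R m"
proof -
  have "inner m m \<noteq> 0" using assms(1) by simp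
  with assms(2) show ?thesis
    by (cases m, cases d) (simp add: field_simps prod_eq_iff inner_prod_def power2_eq_square, algebra)
qed

lemma collinear_if_orthogonal_to_rotation_field:
  fixes x :: "'i \<Rightarrow> real \<times> real" and m p :: "real \<times> real"
  assumes "m \<noteq> 0" and "c \<noteq> 0"
    and orth: "\<And>i. i \<in> I \<Longrightarrow> inner m (p + c *\<^sub>R (- snd (x i), fst (x i))) = 0"
  shows "collinear (x ` I)"
  unfolding collinear_def
proof (intro exI[of _ m] ballI)
  fix y z assume "y \<in> x ` I" "z \<in> x ` I"
  then obtain i j where "i \<in> I" "j \<in> I" and yz: "y = x i" "z = x j" by auto
  then have "c * (snd m * fst (y - z) - fst m * snd (y - z)) = 0"
    using orth[of i] orth[of j] by (simp add: inner_prod_def algebra_simps)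
  then show "\<exists>t. y - z = t *\<^sub>R m"
    using parallel_if_cross_eq_0[OF assms(1), of "y - z"] assms(2) by auto
qed

lemma pair_at_vec_first: "Suc k < n \<Longrightarrow> pair_at (vec_first v n) k = pair_at v k"
  by (simp add: pair_at_def vec_first_def)

lemma pair_at_kernel_combination:
  "i < n \<Longrightarrow> pair_at (a \<cdot>\<^sub>v w1 n + b \<cdot>\<^sub>v w2 n + c \<cdot>\<^sub>v w3 n xh) (2*i) = (a, b) + c *\<^sub>R (- snd (xh i), fst (xh i))"
  by (simp add: pair_at_def w1_def w2_def w3_def)

locale flock_linearization =
  fixes M :: nat and G :: "real mat" and \<beta> :: real and m :: "real \<times> real" and xh :: "nat \<Rightarrow> real \<times> real"
  assumes G_carrier: "G \<in> carrier_mat (2*Suc M) (2*Suc M)"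
    and G_symmetric: "transpose_mat G = G"
    and kernel_G: "mat_kernel G = {a \<cdot>\<^sub>v w1 (Suc M) + b \<cdot>\<^sub>v w2 (Suc M) + c \<cdot>\<^sub>v w3 (Suc M) xh | a b c. True}"
    and not_collinear: "\<not> collinear (xh ` {0..<Suc M})"
    and \<beta>_pos: "\<beta> > 0"
    and m_nonzero: "m \<noteq> 0"
begin

abbreviation F :: "real mat" where "F \<equiv> FBB (Suc M) G \<beta> m"

lemma w1_w2_in_kernel: "w1 (Suc M) \<in> mat_kernel G" "w2 (Suc M) \<in> mat_kernel G"
proof -
  have "w1 (Suc M) = 1 \<cdot>\<^sub>v w1 (Suc M) + 0 \<cdot>\<^sub>v w2 (Suc M) + 0 \<cdot>\<^sub>v w3 (Suc M) xh"
    "w2 (Suc M) = 0 \<cdot>\<^sub>v w1 (Suc M) + 1 \<cdot>\<^sub>v w2 (Suc M) + 0 \<cdot>\<^sub>v w3 (Suc M) xh"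
    by (auto simp: w1_def w2_def w3_def)
  then show "w1 (Suc M) \<in> mat_kernel G" "w2 (Suc M) \<in> mat_kernel G"
    unfolding kernel_G by blast+
qed

context
  fixes v :: "real vec"
  assumes v: "v \<in> carrier_vec (4*Suc M)"
    and F_F_v: "F *\<^sub>v (F *\<^sub>v v) = 0\<^sub>v (4*Suc M)"
begin

abbreviation u :: "real vec" where "u \<equiv> F *\<^sub>v v"

lemma u_carrier: "u \<in> carrier_vec (4*Suc M)"
  by (rule mult_mat_vec_carrier[OF FBB_carrier v])

lemma pair_at_F_u: "Suc k < 4*Suc M \<Longrightarrow> pair_at (F *\<^sub>v u) k = 0"
  by (simp add: F_F_v pair_at_def zero_prod_def)

lemma velocity_u_eq_0: "i < M \<Longrightarrow> pair_at u (2*M+2+2*i) = 0"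
  using FBB_mult_vec_position[OF u_carrier] pair_at_F_u[of "2*i"] by simp

lemma mean_velocity_u_eq_0: "pair_at u (4*M+2) = 0"
proof -
  have u: "pair_at u (4*M+2) = - (2*\<beta>*inner m (pair_at v (4*M+2))) *\<^sub>R m"
    by (rule FBB_mult_vec_mean_velocity[OF v])
  have "0 = pair_at (F *\<^sub>v u) (4*M+2)"
    using pair_at_F_u by simp
  also have "\<dots> = - (2*\<beta>*inner m (pair_at u (4*M+2))) *\<^sub>R m"
    by (rule FBB_mult_vec_mean_velocity[OF u_carrier])
  finally have "inner m (pair_at u (4*M+2)) = 0"
    using \<beta>_pos m_nonzero by simp
  then have "inner m (pair_at v (4*M+2)) = 0"
    unfolding u using \<beta>_pos m_nonzero by simp
  then show ?thesis
    unfolding u by simp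
qed

lemma sum_position_u_eq_0: "(\<Sum>i<Suc M. pair_at u (2*i)) = 0"
  using FBB_mult_vec_position[OF v] FBB_mult_vec_last_position[OF v] by simp

lemma G_mult_position_u: "G *\<^sub>v vec_first u (2*Suc M) = 0\<^sub>v (2*Suc M)"
proof (rule eq_zero_vec_if_pair_at)
  have init: "pair_at (G *\<^sub>v vec_first u (2*Suc M)) (2*i) = 0" if "i < M" for i
    using FBB_mult_vec_velocity[OF G_carrier u_carrier that] pair_at_F_u[of "2*M+2+2*i"]
      velocity_u_eq_0[OF that] that by simp
  moreover have "pair_at (G *\<^sub>v vec_first u (2*Suc M)) (2*M) = 0"
    using sum_pair_at_mult_vec_eq_0[OF G_carrier G_symmetric w1_w2_in_kernel, of "vec_first u (2*Suc M)"] init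
    by simp
  ultimately show "pair_at (G *\<^sub>v vec_first u (2*Suc M)) (2*i) = 0" if "i < Suc M" for i
    using that less_Suc_eq by auto
qed (use G_carrier in simp)

lemma G_mult_position_v:
  assumes "i < Suc M"
  shows "pair_at (G *\<^sub>v vec_first v (2*Suc M)) (2*i) = (2*\<beta>*inner m (pair_at u (2*i))) *\<^sub>R m"
proof -
  have init: "pair_at (G *\<^sub>v vec_first v (2*Suc M)) (2*j) = (2*\<beta>*inner m (pair_at u (2*j))) *\<^sub>R m"
    if "j < M" for j
    using FBB_mult_vec_velocity[OF G_carrier v that] velocity_u_eq_0[OF that]
      FBB_mult_vec_position[OF v that] by simp
  moreover have "pair_at (G *\<^sub>v vec_first v (2*Suc M)) (2*M) = (2*\<beta>*inner m (pair_at u (2*M))) *\<^sub>R m"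
  proof -
    have "pair_at (G *\<^sub>v vec_first v (2*Suc M)) (2*M) = - (\<Sum>j<M. (2*\<beta>*inner m (pair_at u (2*j))) *\<^sub>R m)"
      using sum_pair_at_mult_vec_eq_0[OF G_carrier G_symmetric w1_w2_in_kernel, of "vec_first v (2*Suc M)"] init
      by (simp add: eq_neg_iff_add_eq_0 add.commute)
    also have "\<dots> = (2*\<beta>*inner m (- (\<Sum>j<M. pair_at u (2*j)))) *\<^sub>R m"
      by (simp add: inner_sum_right sum_distrib_left scaleR_sum_left)
    also have "- (\<Sum>j<M. pair_at u (2*j)) = pair_at u (2*M)"
      using sum_position_u_eq_0 by (simp add: add_eq_0_iff2)
    finally show ?thesis .
  qed
  ultimately show ?thesis
    using assms less_Suc_eq by auto
qed

lemma inner_position_u_eq_0: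
  assumes "i < Suc M"
  shows "inner m (pair_at u (2*i)) = 0"
proof -
  let ?ux = "vec_first u (2*Suc M)" and ?vx = "vec_first v (2*Suc M)"
  have "0 = (G *\<^sub>v ?ux) \<bullet> ?vx"
    unfolding G_mult_position_u by simp
  also have "\<dots> = ?ux \<bullet> (G *\<^sub>v ?vx)"
    using transpose_vec_mult_scalar[OF G_carrier, of ?vx ?ux] G_symmetric by simp
  also have "\<dots> = (\<Sum>j<Suc M. inner (pair_at ?ux (2*j)) (pair_at (G *\<^sub>v ?vx) (2*j)))"
    by (rule scalar_prod_eq_sum_inner_pair_at) (use G_carrier in auto)
  also have "\<dots> = (\<Sum>j<Suc M. 2*\<beta>*(inner m (pair_at u (2*j)))\<^sup>2)"
  proof (intro sum.cong refl)
    fix j assume "j \<in> {..<Suc M}"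
    then show "inner (pair_at ?ux (2*j)) (pair_at (G *\<^sub>v ?vx) (2*j)) = 2*\<beta>*(inner m (pair_at u (2*j)))\<^sup>2"
      using G_mult_position_v[of j] pair_at_vec_first[of "2*j" "2*Suc M" u]
      by (simp add: inner_commute power2_eq_square)
  qed
  finally have "(\<Sum>j<Suc M. 2*\<beta>*(inner m (pair_at u (2*j)))\<^sup>2) = 0" ..
  then have "\<forall>j\<in>{..<Suc M}. 2*\<beta>*(inner m (pair_at u (2*j)))\<^sup>2 = 0"
    by (subst (asm) sum_nonneg_eq_0_iff) (use \<beta>_pos in auto)
  then show ?thesis
    using assms \<beta>_pos by simp
qed

lemma position_u_eq_0:
  assumes "i < Suc M"
  shows "pair_at u (2*i) = 0"
proof -
  have "vec_first u (2*Suc M) \<in> mat_kernel G"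
    using G_carrier G_mult_position_u by (intro mat_kernelI) auto
  then obtain a b c where "vec_first u (2*Suc M) = a \<cdot>\<^sub>v w1 (Suc M) + b \<cdot>\<^sub>v w2 (Suc M) + c \<cdot>\<^sub>v w3 (Suc M) xh"
    using kernel_G by auto
  then have u: "pair_at u (2*j) = (a, b) + c *\<^sub>R (- snd (xh j), fst (xh j))" if "j < Suc M" for j
    using pair_at_kernel_combination[OF that, of a b c xh] pair_at_vec_first[of "2*j" "2*Suc M" u] that
    by simp
  have "c = 0"
  proof (rule ccontr)
    assume "c \<noteq> 0"
    with m_nonzero have "collinear (xh ` {0..<Suc M})"
      by (rule collinear_if_orthogonal_to_rotation_field[where p="(a, b)"])
        (use inner_position_u_eq_0 u in auto)
    with not_collinear show False ..
  qed
  then have "(\<Sum>j<Suc M. (a, b)) = (0 :: real \<times> real)"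
    using sum_position_u_eq_0 u by simp
  moreover have "(\<Sum>j<Suc M. (a, b)) = real (Suc M) *\<^sub>R (a, b)"
    by (simp add: prod_eq_iff fst_sum snd_sum algebra_simps)
  ultimately have "real (Suc M) *\<^sub>R (a, b) = 0"
    by simp
  then have "(a, b) = 0"
    by (simp only: scaleR_eq_0_iff of_nat_eq_0_iff) simp
  then show ?thesis
    using u[OF assms] \<open>c = 0\<close> by (simp add: zero_prod_def)
qed

lemma F_v_eq_0: "u = 0\<^sub>v (4*Suc M)"
proof -
  have "pair_at u (2*i) = 0" if i: "i < 2*Suc M" for i
  proof -
    consider "i < Suc M" | "Suc M \<le> i" "i < 2*M+1" | "i = 2*M+1"
      using i by atomize_elim arith
    then show ?thesis
    proof cases
      case 1 then show ?thesis by (rule position_u_eq_0)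
    next
      case 2
      then have j: "i - Suc M < M" and idx: "2*M+2+2*(i - Suc M) = 2*i"
        by auto
      show ?thesis
        using velocity_u_eq_0[OF j] unfolding idx .
    next
      case 3 then show ?thesis using mean_velocity_u_eq_0 by simp
    qed
  qed
  moreover have four: "4*Suc M = 2*(2*Suc M)"
    by simp
  ultimately show ?thesis
    using eq_zero_vec_if_pair_at u_carrier unfolding four by blast
qed

end

lemma mat_kernel_FBB_square: "mat_kernel (F * F) = mat_kernel F"
proof
  show "mat_kernel (F * F) \<subseteq> mat_kernel F"
  proof
    fix v assume "v \<in> mat_kernel (F * F)"
    with mult_carrier_mat[OF FBB_carrier FBB_carrier]
    have v: "v \<in> carrier_vec (4*Suc M)" and "(F * F) *\<^sub>v v = 0\<^sub>v (4*Suc M)"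
      by (rule mat_kernelD)+
    then have "F *\<^sub>v (F *\<^sub>v v) = 0\<^sub>v (4*Suc M)"
      using assoc_mult_mat_vec[OF FBB_carrier FBB_carrier v] by simp
    then show "v \<in> mat_kernel F"
      by (rule mat_kernelI[OF FBB_carrier v F_v_eq_0[OF v]])
  qed
  show "mat_kernel F \<subseteq> mat_kernel (F * F)"
    using mat_kernel_mult_subset FBB_carrier by blast
qed

end

theorem lemma3:
  fixes N :: nat and \<alpha> \<beta> :: real
    and W :: "real \<times> real \<Rightarrow> real" and U :: "real \<Rightarrow> real"
    and gradW :: "real \<times> real \<Rightarrow> real \<times> real"
    and D2W :: "real \<times> real \<Rightarrow> real \<times> real \<Rightarrow> real \<times> real"
    and xh :: "nat \<Rightarrow> real \<times> real" and m0 :: "real \<times> real"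
  assumes N2: "N \<ge> 2" and alpha: "\<alpha> > 0" and beta: "\<beta> > 0"
    and radial: "\<forall>x. W x = U (norm x)"
    and C2: "C2_grad_hess W gradW D2W"
    and H1: "\<forall>i<N. (\<Sum>j\<in>{0..<N} - {i}. gradW (xh i - xh j)) = 0"
    and H2_span: "mat_kernel (Gmat N D2W xh) =
         {a \<cdot>\<^sub>v w1 N + b \<cdot>\<^sub>v w2 N + c \<cdot>\<^sub>v w3 N xh | a b c. True}"
    and H2_indep: "\<forall>a b c. a \<cdot>\<^sub>v w1 N + b \<cdot>\<^sub>v w2 N + c \<cdot>\<^sub>v w3 N xh = 0\<^sub>v (2*N)
                      \<longrightarrow> a = 0 \<and> b = 0 \<and> c = 0"
    and H3: "\<forall>z. eigenvalue (map_mat complex_of_real (Gmat N D2W xh)) z \<and> z \<noteq> 0 \<longrightarrow> Re z < 0"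
    and H4: "\<not> collinear (xh ` {0..<N})"
    and m0: "(fst m0)\<^sup>2 + (snd m0)\<^sup>2 = \<alpha> / \<beta>"
  shows "mat_kernel (FBB N (Gmat N D2W xh) \<beta> m0 * FBB N (Gmat N D2W xh) \<beta> m0)
       = mat_kernel (FBB N (Gmat N D2W xh) \<beta> m0)"
proof -
  obtain M where N: "N = Suc M"
    using N2 by (cases N) auto
  have "m0 \<noteq> 0"
    using m0 alpha beta by (auto simp: zero_prod_def)
  interpret flock_linearization M "Gmat (Suc M) D2W xh" \<beta> m0 xh
  proof
    show "Gmat (Suc M) D2W xh \<in> carrier_mat (2*Suc M) (2*Suc M)"
      by (rule Gmat_carrier)
    show "transpose_mat (Gmat (Suc M) D2W xh) = Gmat (Suc M) D2W xh"
      by (rule transpose_Gmat[OF hess_entry_commute[OF C2] hess_entry_uminus[OF C2 radial]])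
  qed (use H2_span H4 beta \<open>m0 \<noteq> 0\<close> in \<open>simp_all add: N\<close>)
  show ?thesis
    unfolding N by (rule mat_kernel_FBB_square)
qed

end
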